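(* Let $G=\langle S_k\mid K\rangle$ be a finitely generated semigroup as described in the context, $\mathcal{A}$ a finite alphabet and $X\subseteq\mathcal{A}^G$ a tree shift. For all $1\le i\le k$, $m\ge0$, $n\ge0$ and $q\ge1$: (i) $|\bar{\Delta}^{(s_i)}_n|=1+\sum_{l=1}^n\sum_{j=1}^k K^l(s_i,s_j)$; (ii) $|\bar{\Delta}^{(s_i)}_{n+q(m+1)}|=|\bar{\Delta}^{(s_i)}_n|+\sum_{l=1}^k\sum_{j=0}^{q-1}K^{n+j(m+1)+1}(s_i,s_l)\,|\bar{\Delta}^{(s_l)}_m|$; (iii) $p^{(s_i)}_{n+q(m+1)}\le p^{(s_i)}_n\prod_{l=1}^k\big(p^{(s_l)}_m\big)^{\sum_{j=0}^{q-1}K^{n+j(m+1)+1}(s_i,s_l)}$. Here $K^l(s_i,s_j)$ denotes the $(s_i,s_j)$ entry of the $l$th power of $K$.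
   Context: Let $K$ be a $k\times k$ matrix with entries in $\{0,1\}$ indexed by $S_k=\{s_1,\dots,s_k\}$, and let $G=\langle S_k\mid K\rangle$ be the semigroup generated by $S_k$ subject to the relations $s_is_j=1_G$ if and only if $K(s_i,s_j)=0$ ($1_G$ the identity). Every $g\in G$ has a unique minimal representation $g=g_1g_2\cdots g_n$ with $g_l\in S_k$ and $K(g_l,g_{l+1})=1$; its length is $|g|=n$ (with $|1_G|=0$). For $g\in G$ and $n\ge0$ the $n$-semiball at $g$ is $\bar{\Delta}^{(g)}_n=\{gh: h\in G,\ |h|\le n,\ |gh|=|g|+|h|\}$. For a finite alphabet $\mathcal{A}$, a pattern is a map $u:H\to\mathcal{A}$ with $H\subset G$ finite; $u$ is accepted by $t\in\mathcal{A}^G$ if there is $g\in G$ with $t_{gh}=u_h$ for all $h\in H$. A tree shift is a subset $X\subseteq\mathcal{A}^G$ consisting of all $t$ that accept no pattern from some fixed set $\mathcal{F}$ of patterns. $p^{(g)}_n$ denotes the number of patterns $u\in\mathcal{A}^{\bar{\Delta}^{(g)}_n}$ accepted by some $t\in X$. *)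

theory Defs
  imports Main "HOL-Library.FuncSet"
begin

text \<open>Generators s_1..s_k are encoded as the naturals 0..k-1; the (0/1) matrix K is
  a function nat => nat => nat (only the entries with indices below k matter).
  An element of G is represented by its unique minimal representation, i.e. a
  word g_1...g_n over the generators with K(g_l, g_(l+1)) = 1; the identity is [].\<close>

definition semigrp :: "nat \<Rightarrow> (nat \<Rightarrow> nat \<Rightarrow> nat) \<Rightarrow> nat list set" where
  "semigrp k K = {w. set w \<subseteq> {..<k} \<and> successively (\<lambda>a b. K a b = 1) w}"

text \<open>Product of minimal words: concatenate and cancel s_a s_b = 1 (when K a b = 0)
  at the junction as long as possible. The first argument is the reversed left word.\<close>

fun cancel :: "(nat \<Rightarrow> nat \<Rightarrow> nat) \<Rightarrow> nat list \<Rightarrow> nat list \<Rightarrow> nat list" where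
  "cancel K [] h = h"
| "cancel K ra [] = rev ra"
| "cancel K (a # ra) (b # h) =
     (if K a b = 0 then cancel K ra h else rev (a # ra) @ b # h)"

definition gmult :: "(nat \<Rightarrow> nat \<Rightarrow> nat) \<Rightarrow> nat list \<Rightarrow> nat list \<Rightarrow> nat list" where
  "gmult K g h = cancel K (rev g) h"

definition semiball :: "nat \<Rightarrow> (nat \<Rightarrow> nat \<Rightarrow> nat) \<Rightarrow> nat list \<Rightarrow> nat \<Rightarrow> nat list set" where
  "semiball k K g n = {gmult K g h | h. h \<in> semigrp k K \<and> length h \<le> n \<and>
                         length (gmult K g h) = length g + length h}"

fun matpow :: "nat \<Rightarrow> (nat \<Rightarrow> nat \<Rightarrow> nat) \<Rightarrow> nat \<Rightarrow> nat \<Rightarrow> nat \<Rightarrow> nat" where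
  "matpow k K 0 i j = (if i = j then 1 else 0)"
| "matpow k K (Suc l) i j = (\<Sum>r<k. matpow k K l i r * K r j)"

definition accepts :: "nat \<Rightarrow> (nat \<Rightarrow> nat \<Rightarrow> nat) \<Rightarrow> (nat list \<Rightarrow> 'a) \<Rightarrow> nat list set \<Rightarrow> (nat list \<Rightarrow> 'a) \<Rightarrow> bool" where
  "accepts k K t H u \<longleftrightarrow> (\<exists>g\<in>semigrp k K. \<forall>h\<in>H. t (gmult K g h) = u h)"

definition is_pattern :: "nat \<Rightarrow> (nat \<Rightarrow> nat \<Rightarrow> nat) \<Rightarrow> 'a set \<Rightarrow> nat list set \<times> (nat list \<Rightarrow> 'a) \<Rightarrow> bool" where
  "is_pattern k K A Hu \<longleftrightarrow> finite (fst Hu) \<and> fst Hu \<subseteq> semigrp k K \<and> snd Hu \<in> fst Hu \<rightarrow>\<^sub>E A"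

definition tree_shift :: "nat \<Rightarrow> (nat \<Rightarrow> nat \<Rightarrow> nat) \<Rightarrow> 'a set \<Rightarrow> (nat list \<Rightarrow> 'a) set \<Rightarrow> bool" where
  "tree_shift k K A X \<longleftrightarrow>
     (\<exists>F. (\<forall>Hu\<in>F. is_pattern k K A Hu) \<and>
          X = {t \<in> semigrp k K \<rightarrow>\<^sub>E A. \<forall>(H, u)\<in>F. \<not> accepts k K t H u})"

definition pcount :: "nat \<Rightarrow> (nat \<Rightarrow> nat \<Rightarrow> nat) \<Rightarrow> 'a set \<Rightarrow> (nat list \<Rightarrow> 'a) set \<Rightarrow> nat list \<Rightarrow> nat \<Rightarrow> nat" where
  "pcount k K A X g n = card {u \<in> semiball k K g n \<rightarrow>\<^sub>E A.
                               \<exists>t\<in>X. accepts k K t (semiball k K g n) u}"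

end

theory Submission
  imports Defs
begin

text \<open>For a 0/1 matrix K the semiball of radius n at s_i is the set of reduced words of
  length at most n + 1 beginning with i, and the reduced words of length p + 1 from i to l are
  the walks of length p in the graph with adjacency matrix K, of which there are K^p(i,l); this
  gives (i). A word of the semiball of radius N + m + 1 that is longer than N + 1 splits uniquely
  into its first N + 1 letters and a word of the semiball of radius m at its next letter l, and
  the first N + 2 letters form a walk of length N + 1 to l. Counting these splittings gives (ii)
  for q = 1. For (iii), an accepted pattern on the large semiball is determined by its
  restrictions to the semiball of radius N and to the translated semiballs of radius m, and each
  restriction is again accepted, by the same configuration at a translated base point. Both
  one-step relations are then iterated q times.\<close>

definition rooted_words :: "nat \<Rightarrow> (nat \<Rightarrow> nat \<Rightarrow> nat) \<Rightarrow> nat \<Rightarrow> nat \<Rightarrow> nat list set" where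
  "rooted_words k K i n = {w \<in> semigrp k K. w \<noteq> [] \<and> hd w = i \<and> length w \<le> Suc n}"

text \<open>A walk of length p has p + 1 letters.\<close>

definition walks_from :: "nat \<Rightarrow> (nat \<Rightarrow> nat \<Rightarrow> nat) \<Rightarrow> nat \<Rightarrow> nat \<Rightarrow> nat list set" where
  "walks_from k K i p = {w \<in> semigrp k K. length w = Suc p \<and> hd w = i}"

definition walks :: "nat \<Rightarrow> (nat \<Rightarrow> nat \<Rightarrow> nat) \<Rightarrow> nat \<Rightarrow> nat \<Rightarrow> nat \<Rightarrow> nat list set" where
  "walks k K i p l = {w \<in> walks_from k K i p. last w = l}"

lemma semigrp_Nil [simp]: "[] \<in> semigrp k K"
  unfolding semigrp_def by simp

lemma semigrp_Cons:
  "x # w \<in> semigrp k K \<longleftrightarrow> x < k \<and> w \<in> semigrp k K \<and> (w = [] \<or> K x (hd w) = 1)"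
  unfolding semigrp_def by (auto simp: successively_Cons)

lemma semigrp_append:
  "v @ w \<in> semigrp k K \<longleftrightarrow>
     v \<in> semigrp k K \<and> w \<in> semigrp k K \<and> (v = [] \<or> w = [] \<or> K (last v) (hd w) = 1)"
  unfolding semigrp_def by (auto simp: successively_append_iff)

lemma semigrp_letter_less: "w \<in> semigrp k K \<Longrightarrow> x \<in> set w \<Longrightarrow> x < k"
  unfolding semigrp_def by auto

lemma semigrp_take_drop: "w \<in> semigrp k K \<Longrightarrow> take n w \<in> semigrp k K \<and> drop n w \<in> semigrp k K"
  using semigrp_append[of "take n w" "drop n w"] by simp

lemma finite_rooted_words: "finite (rooted_words k K i n)"
proof (rule finite_subset)
  show "rooted_words k K i n \<subseteq> {w. set w \<subseteq> {..<k} \<and> length w \<le> Suc n}"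
    unfolding rooted_words_def semigrp_def by auto
qed (rule finite_lists_length_le, simp)

lemma walks_from_subset_rooted_words: "p \<le> n \<Longrightarrow> walks_from k K i p \<subseteq> rooted_words k K i n"
  unfolding walks_from_def rooted_words_def by auto

lemma finite_walks_from: "finite (walks_from k K i p)"
  using finite_rooted_words walks_from_subset_rooted_words by (metis order_refl finite_subset)

lemma finite_walks: "finite (walks k K i p l)"
  unfolding walks_def using finite_walks_from by simp

lemma last_walks_from_less: "w \<in> walks_from k K i p \<Longrightarrow> last w < k"
  unfolding walks_from_def by (auto intro!: semigrp_letter_less[OF _ last_in_set])

lemma sum_walks_from_last:
  "(\<Sum>y\<in>walks_from k K i p. f (last y)) = (\<Sum>l<k. of_nat (card (walks k K i p l)) * f l)"
proof -
  have "(\<Sum>y\<in>walks_from k K i p. f (last y)) = (\<Sum>l<k. \<Sum>y\<in>walks k K i p l. f (last y))"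
    unfolding walks_def
    by (rule sum.group[symmetric]) (auto simp: finite_walks_from last_walks_from_less)
  also have "\<dots> = (\<Sum>l<k. of_nat (card (walks k K i p l)) * f l)"
    unfolding walks_def by (intro sum.cong refl) simp
  finally show ?thesis .
qed

lemma prod_walks_from_last:
  "(\<Prod>y\<in>walks_from k K i p. f (last y)) = (\<Prod>l<k. f l ^ card (walks k K i p l))"
proof -
  have "(\<Prod>y\<in>walks_from k K i p. f (last y)) = (\<Prod>l<k. \<Prod>y\<in>walks k K i p l. f (last y))"
    unfolding walks_def
    by (rule prod.group[symmetric]) (auto simp: finite_walks_from last_walks_from_less)
  also have "\<dots> = (\<Prod>l<k. f l ^ card (walks k K i p l))"
    unfolding walks_def by (intro prod.cong refl) simp
  finally show ?thesis .
qed

lemma walks_0: "i < k \<Longrightarrow> walks k K i 0 l = (if i = l then {[i]} else {})"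
  unfolding walks_def walks_from_def by (auto simp: length_Suc_conv semigrp_Cons)

lemma walks_from_Suc:
  "walks_from k K i (Suc p) =
     {v @ [l] | v l. v \<in> walks_from k K i p \<and> l < k \<and> K (last v) l = 1}"
  (is "?L = ?R")
proof
  show "?L \<subseteq> ?R"
  proof
    fix w assume w: "w \<in> ?L"
    define v where "v = butlast w"
    have "length w = Suc (Suc p)" using w unfolding walks_from_def by simp
    then have w_eq: "w = v @ [last w]" and v: "v \<noteq> []" "length v = Suc p"
      unfolding v_def by (auto simp flip: length_0_conv)
    have "v @ [last w] \<in> semigrp k K" "hd (v @ [last w]) = i"
      using w w_eq unfolding walks_from_def by simp_all
    then have "v \<in> walks_from k K i p" "last w < k" "K (last v) (last w) = 1"
      using v unfolding walks_from_def by (auto simp: semigrp_append semigrp_Cons)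
    with w_eq show "w \<in> ?R" by blast
  qed
next
  show "?R \<subseteq> ?L"
    unfolding walks_from_def by (auto simp: semigrp_append semigrp_Cons hd_append)
qed

lemma walks_Suc:
  "l < k \<Longrightarrow> walks k K i (Suc p) l = (\<Union>r\<in>{r. r < k \<and> K r l = 1}. (\<lambda>w. w @ [l]) ` walks k K i p r)"
  unfolding walks_def walks_from_Suc by (auto intro: last_walks_from_less)

lemma card_walks:
  assumes K01: "\<forall>a<k. \<forall>b<k. K a b \<in> {0, 1}" and i: "i < k" and l: "l < k"
  shows "card (walks k K i p l) = matpow k K p i l"
  using l
proof (induction p arbitrary: l)
  case 0
  then show ?case using i by (simp add: walks_0)
next
  case (Suc p)
  let ?R = "{r. r < k \<and> K r l = 1}"
  have "card (walks k K i (Suc p) l) = (\<Sum>r\<in>?R. card ((\<lambda>w. w @ [l]) ` walks k K i p r))"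
    unfolding walks_Suc[OF Suc.prems]
  proof (rule card_UN_disjoint)
    show "\<forall>r\<in>?R. \<forall>r'\<in>?R. r \<noteq> r' \<longrightarrow>
        (\<lambda>w. w @ [l]) ` walks k K i p r \<inter> (\<lambda>w. w @ [l]) ` walks k K i p r' = {}"
      unfolding walks_def by auto
  qed (simp_all add: finite_walks)
  also have "\<dots> = (\<Sum>r\<in>?R. matpow k K p i r)"
    by (intro sum.cong refl) (simp add: card_image inj_on_def Suc.IH)
  also have "\<dots> = (\<Sum>r<k. if K r l = 1 then matpow k K p i r else 0)"
  proof -
    have "?R = {r \<in> {..<k}. K r l = 1}" by auto
    then show ?thesis by (simp only: sum.inter_filter[OF finite_lessThan])
  qed
  also have "\<dots> = (\<Sum>r<k. matpow k K p i r * K r l)"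
    using K01 Suc.prems by (intro sum.cong refl) fastforce
  finally show ?case by simp
qed

lemma card_walks_from:
  assumes K01: "\<forall>a<k. \<forall>b<k. K a b \<in> {0, 1}" and i: "i < k"
  shows "card (walks_from k K i p) = (\<Sum>l<k. matpow k K p i l)"
proof -
  have "card (walks_from k K i p) = (\<Sum>l<k. card (walks k K i p l))"
    using sum_walks_from_last[where f = "\<lambda>_. 1 :: nat"] by simp
  then show ?thesis using card_walks[OF K01 i] by simp
qed

lemma card_rooted_words:
  assumes K01: "\<forall>a<k. \<forall>b<k. K a b \<in> {0, 1}" and i: "i < k"
  shows "card (rooted_words k K i n) = (\<Sum>p=0..n. \<Sum>l<k. matpow k K p i l)"
proof -
  have rooted_eq: "rooted_words k K i n = (\<Union>p\<in>{0..n}. walks_from k K i p)"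
  proof (intro equalityI subsetI)
    fix w assume "w \<in> rooted_words k K i n"
    then show "w \<in> (\<Union>p\<in>{0..n}. walks_from k K i p)"
      unfolding rooted_words_def walks_from_def by (intro UN_I[of "length w - 1"]) auto
  qed (auto simp: rooted_words_def walks_from_def)
  have "card (rooted_words k K i n) = (\<Sum>p=0..n. card (walks_from k K i p))"
    unfolding rooted_eq
  proof (rule card_UN_disjoint)
    show "\<forall>p\<in>{0..n}. \<forall>p'\<in>{0..n}. p \<noteq> p' \<longrightarrow> walks_from k K i p \<inter> walks_from k K i p' = {}"
      unfolding walks_from_def by auto
  qed (simp_all add: finite_walks_from)
  then show ?thesis using card_walks_from[OF K01 i] by simp
qed

lemma butlast_walks_from:
  assumes "y \<in> walks_from k K i (Suc p)"
  shows "butlast y \<in> walks_from k K i p" "K (last (butlast y)) (last y) = 1"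
  using assms unfolding walks_from_Suc by auto

lemma walk_append_rooted_words:
  assumes y: "y \<in> walks_from k K i (Suc N)" and x: "x \<in> rooted_words k K (last y) m"
  shows "butlast y @ x \<in> rooted_words k K i (N + Suc m)" "Suc N < length (butlast y @ x)"
proof -
  have v: "butlast y \<in> walks_from k K i N" "K (last (butlast y)) (hd x) = 1"
    using butlast_walks_from[OF y] x unfolding rooted_words_def by auto
  moreover have "butlast y \<noteq> []"
    using v(1) unfolding walks_from_def by (auto simp del: length_butlast)
  ultimately show "butlast y @ x \<in> rooted_words k K i (N + Suc m)"
    using x unfolding rooted_words_def walks_from_def by (auto simp: semigrp_append hd_append)
  show "Suc N < length (butlast y @ x)"
    using v x unfolding rooted_words_def walks_from_def by auto
qed

lemma rooted_words_split:
  "rooted_words k K i (N + Suc m) = rooted_words k K i N \<union>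
     (\<lambda>(y, x). butlast y @ x) ` (SIGMA y:walks_from k K i (Suc N). rooted_words k K (last y) m)"
  (is "?L = ?S \<union> ?E")
proof (intro equalityI subsetI)
  fix w assume w: "w \<in> ?L"
  show "w \<in> ?S \<union> ?E"
  proof (cases "length w \<le> Suc N")
    case True
    with w show ?thesis unfolding rooted_words_def by auto
  next
    case False
    define y where "y = take (Suc (Suc N)) w"
    define x where "x = drop (Suc N) w"
    have w: "w \<in> semigrp k K" "hd w = i" "length w \<le> Suc (N + Suc m)"
      using w unfolding rooted_words_def by auto
    have w_eq: "w = butlast y @ x"
      using False unfolding y_def x_def by (simp add: butlast_take)
    have "last y = w ! Suc N" "hd x = w ! Suc N"
      using False unfolding y_def x_def by (simp_all add: take_Suc_conv_app_nth hd_drop_conv_nth)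
    then have "y \<in> walks_from k K i (Suc N)" "x \<in> rooted_words k K (last y) m"
      using False w semigrp_take_drop[OF w(1)]
      unfolding walks_from_def rooted_words_def y_def x_def by auto
    with w_eq show ?thesis by (auto intro!: UnI2 image_eqI[of _ _ "(y, x)"])
  qed
next
  fix w assume "w \<in> ?S \<union> ?E"
  then show "w \<in> ?L"
    using walk_append_rooted_words(1) unfolding rooted_words_def by auto
qed

lemma inj_on_walk_append:
  "inj_on (\<lambda>(y, x). butlast y @ x) (SIGMA y:walks_from k K i p. rooted_words k K (last y) m)"
proof (rule inj_onI, clarsimp)
  fix y x y' x'
  assume y: "y \<in> walks_from k K i p" "y' \<in> walks_from k K i p"
    and x: "x \<in> rooted_words k K (last y) m" "x' \<in> rooted_words k K (last y') m"
    and eq: "butlast y @ x = butlast y' @ x'"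
  have "length (butlast y) = length (butlast y')"
    using y unfolding walks_from_def by simp
  with eq have "butlast y = butlast y'" "x = x'" by simp_all
  moreover have "last y = last y'"
    using x \<open>x = x'\<close> unfolding rooted_words_def by auto
  moreover have "y \<noteq> []" "y' \<noteq> []"
    using y unfolding walks_from_def by auto
  ultimately show "y = y' \<and> x = x'"
    by (metis append_butlast_last_id)
qed

lemma card_rooted_words_add:
  assumes K01: "\<forall>a<k. \<forall>b<k. K a b \<in> {0, 1}" and i: "i < k"
  shows "card (rooted_words k K i (N + Suc m)) =
           card (rooted_words k K i N) + (\<Sum>l<k. matpow k K (Suc N) i l * card (rooted_words k K l m))"
proof -
  let ?\<Sigma> = "SIGMA y:walks_from k K i (Suc N). rooted_words k K (last y) m"
  have "rooted_words k K i N \<inter> (\<lambda>(y, x). butlast y @ x) ` ?\<Sigma> = {}"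
    using walk_append_rooted_words(2) unfolding rooted_words_def by fastforce
  then have "card (rooted_words k K i (N + Suc m)) =
      card (rooted_words k K i N) + card ((\<lambda>(y, x). butlast y @ x) ` ?\<Sigma>)"
    unfolding rooted_words_split
    by (intro card_Un_disjoint finite_rooted_words finite_imageI finite_SigmaI finite_walks_from)
  also have "card ((\<lambda>(y, x). butlast y @ x) ` ?\<Sigma>) = (\<Sum>y\<in>walks_from k K i (Suc N). card (rooted_words k K (last y) m))"
    by (simp add: card_image inj_on_walk_append finite_walks_from finite_rooted_words)
  also have "\<dots> = (\<Sum>l<k. card (walks k K i (Suc N) l) * card (rooted_words k K l m))"
    using sum_walks_from_last[where f = "\<lambda>l. card (rooted_words k K l m)"] by simp
  also have "\<dots> = (\<Sum>l<k. matpow k K (Suc N) i l * card (rooted_words k K l m))"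
    using card_walks[OF K01 i] by (simp del: matpow.simps)
  finally show ?thesis .
qed

lemma cancel_without_cancellation:
  assumes "v \<noteq> []" "x = [] \<or> K (last v) (hd x) \<noteq> 0"
  shows "cancel K (rev v @ ra) x = rev ra @ v @ x"
proof -
  obtain u c where "v = u @ [c]" using assms(1) rev_exhaust by blast
  with assms(2) show ?thesis by (cases x) simp_all
qed

lemma cancel_append:
  "v = [] \<or> x = [] \<or> K (last v) (hd x) \<noteq> 0 \<Longrightarrow>
     cancel K ra (v @ x) = cancel K (rev (cancel K ra v)) x"
proof (induction K ra v rule: cancel.induct)
  case (1 K v)
  then show ?case using cancel_without_cancellation[of v x K "[]"] by (cases "v = []") simp_all
next
  case (2 K a ra)
  then show ?case by simp
next
  case (3 K a ra b v)
  show ?case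
  proof (cases "K a b = 0")
    case True
    with "3.prems" show ?thesis using "3.IH" by (cases "v = []") simp_all
  next
    case False
    then show ?thesis
      using cancel_without_cancellation[of "b # v" x K "a # ra"] "3.prems" by simp
  qed
qed

lemma gmult_append:
  "v = [] \<or> x = [] \<or> K (last v) (hd x) \<noteq> 0 \<Longrightarrow> gmult K g (v @ x) = gmult K (gmult K g v) x"
  unfolding gmult_def by (rule cancel_append)

lemma cancel_in_semigrp:
  "\<forall>a<k. \<forall>b<k. K a b \<in> {0, 1} \<Longrightarrow> rev ra \<in> semigrp k K \<Longrightarrow> h \<in> semigrp k K \<Longrightarrow>
     cancel K ra h \<in> semigrp k K"
proof (induction K ra h rule: cancel.induct)
  case (3 K' a ra b h)
  then have "a < k" "b < k" by (auto simp: semigrp_append semigrp_Cons)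
  then consider "K' a b = 0" | "K' a b = 1" using "3.prems"(1) by fastforce
  then show ?case
  proof cases
    case 1
    with "3.prems" show ?thesis using "3.IH" by (auto simp: semigrp_append semigrp_Cons)
  next
    case 2
    with "3.prems" show ?thesis by (auto simp: semigrp_append semigrp_Cons)
  qed
qed simp_all

lemma gmult_in_semigrp:
  "\<forall>a<k. \<forall>b<k. K a b \<in> {0, 1} \<Longrightarrow> g \<in> semigrp k K \<Longrightarrow> h \<in> semigrp k K \<Longrightarrow>
     gmult K g h \<in> semigrp k K"
  unfolding gmult_def by (rule cancel_in_semigrp) simp_all

lemma semiball_singleton:
  assumes K01: "\<forall>a<k. \<forall>b<k. K a b \<in> {0, 1}" and i: "i < k"
  shows "semiball k K [i] n = rooted_words k K i n"
proof (intro equalityI subsetI)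
  fix w assume "w \<in> semiball k K [i] n"
  then obtain h where h: "h \<in> semigrp k K" "length h \<le> n"
      "length (gmult K [i] h) = Suc (length h)" and w: "w = gmult K [i] h"
    unfolding semiball_def by auto
  have "h = [] \<or> K i (hd h) = 1"
  proof (cases h)
    case (Cons b h')
    then have "K i b \<noteq> 0" using h(3) by (auto simp: gmult_def split: if_splits)
    moreover have "b < k" using h(1) Cons by (simp add: semigrp_Cons)
    ultimately show ?thesis using K01 i Cons by fastforce
  qed simp
  with h i show "w \<in> rooted_words k K i n"
    unfolding w rooted_words_def by (cases h) (auto simp: gmult_def semigrp_Cons)
next
  fix w assume "w \<in> rooted_words k K i n"
  then obtain h where w: "w = i # h" "h \<in> semigrp k K" "length h \<le> n" "h = [] \<or> K i (hd h) = 1"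
    unfolding rooted_words_def by (cases w) (auto simp: semigrp_Cons)
  then have "gmult K [i] h = w" by (cases h) (auto simp: gmult_def)
  with w show "w \<in> semiball k K [i] n"
    unfolding semiball_def by force
qed

definition accepted_patterns ::
    "nat \<Rightarrow> (nat \<Rightarrow> nat \<Rightarrow> nat) \<Rightarrow> 'a set \<Rightarrow> (nat list \<Rightarrow> 'a) set \<Rightarrow> nat list set \<Rightarrow> (nat list \<Rightarrow> 'a) set"
  where "accepted_patterns k K A X H = {u \<in> H \<rightarrow>\<^sub>E A. \<exists>t\<in>X. accepts k K t H u}"

lemma finite_accepted_patterns: "finite A \<Longrightarrow> finite H \<Longrightarrow> finite (accepted_patterns k K A X H)"
  unfolding accepted_patterns_def by (simp add: finite_PiE)

lemma accepted_patterns_shift: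
  assumes K01: "\<forall>a<k. \<forall>b<k. K a b \<in> {0, 1}"
    and u: "u \<in> accepted_patterns k K A X H" and v: "v \<in> semigrp k K"
    and H': "\<And>x. x \<in> H' \<Longrightarrow> v @ x \<in> H \<and> (v = [] \<or> x = [] \<or> K (last v) (hd x) \<noteq> 0)"
  shows "(\<lambda>x\<in>H'. u (v @ x)) \<in> accepted_patterns k K A X H'"
proof -
  obtain t g where t: "t \<in> X" and g: "g \<in> semigrp k K" and tu: "\<forall>h\<in>H. t (gmult K g h) = u h"
    using u unfolding accepted_patterns_def accepts_def by blast
  have "t (gmult K (gmult K g v) x) = (\<lambda>x\<in>H'. u (v @ x)) x" if x: "x \<in> H'" for x
    using tu H'[OF x] gmult_append[of v x K g] x by auto
  moreover have "gmult K g v \<in> semigrp k K"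
    using gmult_in_semigrp[OF K01 g v] .
  moreover have "(\<lambda>x\<in>H'. u (v @ x)) \<in> H' \<rightarrow>\<^sub>E A"
    using u H' unfolding accepted_patterns_def by auto
  ultimately show ?thesis
    using t unfolding accepted_patterns_def accepts_def by blast
qed

lemma card_le_prod_restrictions:
  fixes F :: "('a \<Rightarrow> 'b) set"
  assumes fin: "finite S0" "finite Y" "\<And>y. y \<in> Y \<Longrightarrow> finite (S y)"
    and cover: "D \<subseteq> D0 \<union> (\<Union>y\<in>Y. f y ` J y)"
    and F: "\<And>u. u \<in> F \<Longrightarrow>
      u \<in> D \<rightarrow>\<^sub>E B \<and> restrict u D0 \<in> S0 \<and> (\<forall>y\<in>Y. (\<lambda>x\<in>J y. u (f y x)) \<in> S y)"
  shows "card F \<le> card S0 * (\<Prod>y\<in>Y. card (S y))"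
proof -
  define \<Phi> where "\<Phi> = (\<lambda>u :: 'a \<Rightarrow> 'b. (restrict u D0, \<lambda>y\<in>Y. \<lambda>x\<in>J y. u (f y x)))"
  have "inj_on \<Phi> F"
  proof (rule inj_onI)
    fix u u' assume u: "u \<in> F" "u' \<in> F" and eq: "\<Phi> u = \<Phi> u'"
    show "u = u'"
    proof (rule PiE_ext)
      show "u \<in> D \<rightarrow>\<^sub>E B" "u' \<in> D \<rightarrow>\<^sub>E B" using F u by blast+
      fix z assume "z \<in> D"
      with cover consider "z \<in> D0" | y x where "y \<in> Y" "x \<in> J y" "z = f y x" by blast
      then show "u z = u' z"
      proof cases
        case 1
        have "restrict u D0 z = restrict u' D0 z"
          using eq unfolding \<Phi>_def by simp
        with 1 show ?thesis by simp
      next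
        case 2
        have "(\<lambda>y\<in>Y. \<lambda>x\<in>J y. u (f y x)) y x = (\<lambda>y\<in>Y. \<lambda>x\<in>J y. u' (f y x)) y x"
          using eq unfolding \<Phi>_def by simp
        with 2 show ?thesis by simp
      qed
    qed
  qed
  moreover have "\<Phi> ` F \<subseteq> S0 \<times> (\<Pi>\<^sub>E y\<in>Y. S y)"
    using F unfolding \<Phi>_def by auto
  moreover have "finite (S0 \<times> (\<Pi>\<^sub>E y\<in>Y. S y))"
    using fin by (simp add: finite_PiE)
  ultimately have "card F \<le> card (S0 \<times> (\<Pi>\<^sub>E y\<in>Y. S y))"
    by (rule card_inj_on_le)
  also have "\<dots> = card S0 * (\<Prod>y\<in>Y. card (S y))"
    using fin by (simp add: card_cartesian_product card_PiE)
  finally show ?thesis .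
qed

lemma card_accepted_patterns_add:
  assumes K01: "\<forall>a<k. \<forall>b<k. K a b \<in> {0, 1}" and i: "i < k" and finA: "finite A"
  shows "card (accepted_patterns k K A X (rooted_words k K i (N + Suc m))) \<le>
           card (accepted_patterns k K A X (rooted_words k K i N)) *
           (\<Prod>l<k. card (accepted_patterns k K A X (rooted_words k K l m)) ^ matpow k K (Suc N) i l)"
proof -
  let ?acc = "\<lambda>j n. accepted_patterns k K A X (rooted_words k K j n)"
  let ?W = "walks_from k K i (Suc N)"
  have "card (?acc i (N + Suc m)) \<le> card (?acc i N) * (\<Prod>y\<in>?W. card (?acc (last y) m))"
  proof (rule card_le_prod_restrictions)
    show "rooted_words k K i (N + Suc m) \<subseteq>
        rooted_words k K i N \<union> (\<Union>y\<in>?W. (\<lambda>x. butlast y @ x) ` rooted_words k K (last y) m)"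
      unfolding rooted_words_split by auto
    fix u assume u: "u \<in> ?acc i (N + Suc m)"
    have "restrict u (rooted_words k K i N) \<in> ?acc i N"
      using accepted_patterns_shift[OF K01 u semigrp_Nil, of "rooted_words k K i N"]
      unfolding rooted_words_split by simp
    moreover have "(\<lambda>x\<in>rooted_words k K (last y) m. u (butlast y @ x)) \<in> ?acc (last y) m"
      if y: "y \<in> ?W" for y
    proof (rule accepted_patterns_shift[OF K01 u])
      show "butlast y \<in> semigrp k K"
        using butlast_walks_from(1)[OF y] unfolding walks_from_def by simp
      fix x assume x: "x \<in> rooted_words k K (last y) m"
      then show "butlast y @ x \<in> rooted_words k K i (N + Suc m) \<and>
          (butlast y = [] \<or> x = [] \<or> K (last (butlast y)) (hd x) \<noteq> 0)"
        using walk_append_rooted_words(1)[OF y] butlast_walks_from(2)[OF y]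
        unfolding rooted_words_def by auto
    qed
    ultimately show "u \<in> rooted_words k K i (N + Suc m) \<rightarrow>\<^sub>E A \<and>
        restrict u (rooted_words k K i N) \<in> ?acc i N \<and>
        (\<forall>y\<in>?W. (\<lambda>x\<in>rooted_words k K (last y) m. u (butlast y @ x)) \<in> ?acc (last y) m)"
      using u unfolding accepted_patterns_def by blast
  qed (simp_all add: finA finite_accepted_patterns finite_rooted_words finite_walks_from)
  also have "(\<Prod>y\<in>?W. card (?acc (last y) m)) = (\<Prod>l<k. card (?acc l m) ^ card (walks k K i (Suc N) l))"
    by (rule prod_walks_from_last)
  also have "\<dots> = (\<Prod>l<k. card (?acc l m) ^ matpow k K (Suc N) i l)"
    using card_walks[OF K01 i] by (simp del: matpow.simps)
  finally show ?thesis .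
qed

lemma additive_recurrence_iterate:
  fixes a b :: "nat \<Rightarrow> 'b::comm_monoid_add"
  assumes step: "\<And>N. a (N + Suc m) = a N + b (Suc N)"
  shows "a (n + q * (m + 1)) = a n + (\<Sum>j<q. b (n + j * (m + 1) + 1))"
proof (induction q)
  case (Suc q)
  have "n + Suc q * (m + 1) = n + q * (m + 1) + Suc m" by simp
  then have "a (n + Suc q * (m + 1)) = a (n + q * (m + 1)) + b (Suc (n + q * (m + 1)))"
    by (simp only: step)
  with Suc.IH show ?case by (simp add: add.assoc)
qed simp

lemma submultiplicative_recurrence_iterate:
  fixes a c :: "nat \<Rightarrow> nat"
  assumes step: "\<And>N. a (N + Suc m) \<le> a N * c (Suc N)"
  shows "a (n + q * (m + 1)) \<le> a n * (\<Prod>j<q. c (n + j * (m + 1) + 1))"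
proof (induction q)
  case (Suc q)
  have "n + Suc q * (m + 1) = n + q * (m + 1) + Suc m" by simp
  then have "a (n + Suc q * (m + 1)) \<le> a (n + q * (m + 1)) * c (Suc (n + q * (m + 1)))"
    by (simp only: step)
  also have "\<dots> \<le> a n * (\<Prod>j<q. c (n + j * (m + 1) + 1)) * c (Suc (n + q * (m + 1)))"
    using Suc.IH by (rule mult_right_mono) simp
  finally show ?case by (simp add: mult.assoc)
qed simp

lemma card_rooted_words_iterate:
  assumes K01: "\<forall>a<k. \<forall>b<k. K a b \<in> {0, 1}" and i: "i < k"
  shows "card (rooted_words k K i (n + q * (m + 1))) = card (rooted_words k K i n) +
      (\<Sum>l<k. \<Sum>j<q. matpow k K (n + j * (m + 1) + 1) i l * card (rooted_words k K l m))"
proof -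
  have "card (rooted_words k K i (n + q * (m + 1))) = card (rooted_words k K i n) +
      (\<Sum>j<q. \<Sum>l<k. matpow k K (n + j * (m + 1) + 1) i l * card (rooted_words k K l m))"
    by (rule additive_recurrence_iterate[where a = "\<lambda>N. card (rooted_words k K i N)"
          and b = "\<lambda>N. \<Sum>l<k. matpow k K N i l * card (rooted_words k K l m)",
          OF card_rooted_words_add[OF K01 i]])
  then show ?thesis by (simp only: sum.swap[of _ "{..<k}"])
qed

lemma card_accepted_patterns_iterate:
  assumes K01: "\<forall>a<k. \<forall>b<k. K a b \<in> {0, 1}" and i: "i < k" and finA: "finite A"
  shows "card (accepted_patterns k K A X (rooted_words k K i (n + q * (m + 1)))) \<le>
      card (accepted_patterns k K A X (rooted_words k K i n)) *
      (\<Prod>l<k. card (accepted_patterns k K A X (rooted_words k K l m)) ^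
         (\<Sum>j<q. matpow k K (n + j * (m + 1) + 1) i l))"
proof -
  have "card (accepted_patterns k K A X (rooted_words k K i (n + q * (m + 1)))) \<le>
      card (accepted_patterns k K A X (rooted_words k K i n)) *
      (\<Prod>j<q. \<Prod>l<k. card (accepted_patterns k K A X (rooted_words k K l m)) ^
         matpow k K (n + j * (m + 1) + 1) i l)"
    by (rule submultiplicative_recurrence_iterate[
          where a = "\<lambda>N. card (accepted_patterns k K A X (rooted_words k K i N))"
          and c = "\<lambda>N. \<Prod>l<k. card (accepted_patterns k K A X (rooted_words k K l m)) ^ matpow k K N i l",
          OF card_accepted_patterns_add[OF K01 i finA]])
  then show ?thesis by (simp only: power_sum prod.swap[of _ "{..<k}"])
qed

theorem lemma3p4:
  fixes k :: nat and K :: "nat \<Rightarrow> nat \<Rightarrow> nat" and A :: "'a set"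
    and X :: "(nat list \<Rightarrow> 'a) set" and i m n q :: nat
  assumes K01: "\<forall>a<k. \<forall>b<k. K a b \<in> {0, 1}"
    and finA: "finite A"
    and TS: "tree_shift k K A X"
    and i: "i < k"
    and q: "q \<ge> 1"
  shows "card (semiball k K [i] n) = 1 + (\<Sum>l=1..n. \<Sum>j<k. matpow k K l i j) \<and>
         card (semiball k K [i] (n + q * (m + 1))) =
           card (semiball k K [i] n) +
           (\<Sum>l<k. \<Sum>j<q. matpow k K (n + j * (m + 1) + 1) i l * card (semiball k K [l] m)) \<and>
         pcount k K A X [i] (n + q * (m + 1)) \<le>
           pcount k K A X [i] n *
           (\<Prod>l<k. (pcount k K A X [l] m) ^ (\<Sum>j<q. matpow k K (n + j * (m + 1) + 1) i l))"
proof (intro conjI)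
  have ball: "semiball k K [l] N = rooted_words k K l N" if "l < k" for l N
    using semiball_singleton[OF K01 that] .
  have count: "pcount k K A X [l] N = card (accepted_patterns k K A X (rooted_words k K l N))"
    if "l < k" for l N
    unfolding pcount_def accepted_patterns_def ball[OF that] ..
  show "card (semiball k K [i] n) = 1 + (\<Sum>l=1..n. \<Sum>j<k. matpow k K l i j)"
    using i by (simp add: ball card_rooted_words[OF K01 i] sum.atLeast_Suc_atMost sum.delta)
  show "card (semiball k K [i] (n + q * (m + 1))) = card (semiball k K [i] n) +
      (\<Sum>l<k. \<Sum>j<q. matpow k K (n + j * (m + 1) + 1) i l * card (semiball k K [l] m))"
    using card_rooted_words_iterate[OF K01 i] by (simp add: ball i del: matpow.simps)
  show "pcount k K A X [i] (n + q * (m + 1)) \<le> pcount k K A X [i] n *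
      (\<Prod>l<k. (pcount k K A X [l] m) ^ (\<Sum>j<q. matpow k K (n + j * (m + 1) + 1) i l))"
    using card_accepted_patterns_iterate[OF K01 i finA] by (simp add: count i del: matpow.simps)
qed

end
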